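(* Let $\mathfrak{n}$ be a complex simple Lie algebra of type $B_n$ ($n\ge2$) and let $\mathfrak{n}=\mathfrak{n}_{-3}\oplus\cdots\oplus\mathfrak{n}_3$ be the $|3|$-grading associated to $\Sigma_i=\{\alpha_1,\alpha_i\}$, where $2\le i\le n$. Then there is no graded isomorphism between $\mathfrak{F}_{r,3}$ and $\mathfrak{n}_{-3}\oplus\mathfrak{n}_{-2}\oplus\mathfrak{n}_{-1}$ (for any positive integer $r$).
   Context: Simple roots of $B_n$ are labeled in the standard way, with highest root $\alpha_1+2\alpha_2+\cdots+2\alpha_n$. For a root $\alpha=\sum a_l\alpha_l$ and a set $\Sigma$ of simple roots, $ht_\Sigma(\alpha)=\sum_{\alpha_l\in\Sigma}a_l$; the grading associated to $\Sigma$ is $\mathfrak{n}_m=\bigoplus_{ht_\Sigma(\alpha)=m}\mathfrak{g}_\alpha$ ($m\ne0$), $\mathfrak{n}_0=\mathfrak{h}\oplus\bigoplus_{ht_\Sigma(\alpha)=0}\mathfrak{g}_\alpha$, a $|3|$-grading since the highest root has $\Sigma_i$-height $3$. $\mathfrak{F}_{r,3}$ is the free nilpotent Lie algebra of step $3$ on $r$ generators with canonical grading $\mathfrak{f}_{-1}$ (span of generators), $\mathfrak{f}_{-2}=[\mathfrak{f}_{-1},\mathfrak{f}_{-1}]$, $\mathfrak{f}_{-3}=[\mathfrak{f}_{-1},\mathfrak{f}_{-2}]$; a graded isomorphism is a Lie algebra isomorphism mapping $\mathfrak{f}_{-m}$ onto $\mathfrak{n}_{-m}$ for $m=1,2,3$.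 *)

theory Defs
  imports Complex_Main "HOL-Library.Function_Algebras"
begin

definition cspan :: "(complex \<Rightarrow> 'b \<Rightarrow> 'b) \<Rightarrow> ('b::comm_monoid_add) set \<Rightarrow> 'b set" where
  "cspan sc S = {(\<Sum>v\<in>A. sc (c v) v) | A c. finite A \<and> A \<subseteq> S}"

definition sum3 :: "('b::monoid_add) set \<Rightarrow> 'b set \<Rightarrow> 'b set \<Rightarrow> 'b set" where
  "sum3 A B C = {x + y + z | x y z. x \<in> A \<and> y \<in> B \<and> z \<in> C}"

text \<open>Model: inside the free associative algebra on letters 0..r-1, truncated above
  degree 3 (elements: functions from words to complex numbers), with commutator bracket;
  F_{r,3} is the Lie subalgebra generated by the letters.\<close>

type_synonym fa = "nat list \<Rightarrow> complex"

definition fa_scale :: "complex \<Rightarrow> fa \<Rightarrow> fa" where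
  "fa_scale c a = (\<lambda>w. c * a w)"

definition fa_mul :: "fa \<Rightarrow> fa \<Rightarrow> fa" where
  "fa_mul a b = (\<lambda>w. if length w \<le> 3
      then (\<Sum>k\<in>{1..<length w}. a (take k w) * b (drop k w)) else 0)"

definition fa_br :: "fa \<Rightarrow> fa \<Rightarrow> fa" where
  "fa_br a b = fa_mul a b - fa_mul b a"

definition fa_gen :: "nat \<Rightarrow> fa" where
  "fa_gen i = (\<lambda>w. if w = [i] then 1 else 0)"

definition free_f1 :: "nat \<Rightarrow> fa set" where
  "free_f1 r = cspan fa_scale (fa_gen ` {0..<r})"

definition free_f2 :: "nat \<Rightarrow> fa set" where
  "free_f2 r = cspan fa_scale {fa_br x y | x y. x \<in> free_f1 r \<and> y \<in> free_f1 r}"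

definition free_f3 :: "nat \<Rightarrow> fa set" where
  "free_f3 r = cspan fa_scale {fa_br x y | x y. x \<in> free_f1 r \<and> y \<in> free_f2 r}"

definition free_nil3 :: "nat \<Rightarrow> fa set" where
  "free_nil3 r = sum3 (free_f1 r) (free_f2 r) (free_f3 r)"

section \<open>The simple Lie algebra of type B_n as so(2n+1, C)\<close>

type_synonym cmat = "nat \<Rightarrow> nat \<Rightarrow> complex"

definition m_scale :: "complex \<Rightarrow> cmat \<Rightarrow> cmat" where
  "m_scale c X = (\<lambda>i j. c * X i j)"

definition mmul :: "nat \<Rightarrow> cmat \<Rightarrow> cmat \<Rightarrow> cmat" where
  "mmul N X Y = (\<lambda>i j. if i < N \<and> j < N then (\<Sum>k<N. X i k * Y k j) else 0)"

definition mbr :: "nat \<Rightarrow> cmat \<Rightarrow> cmat \<Rightarrow> cmat" where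
  "mbr N X Y = mmul N X Y - mmul N Y X"

definition mtrans :: "cmat \<Rightarrow> cmat" where
  "mtrans X = (\<lambda>i j. X j i)"

text \<open>Symmetric form on C^(2n+1), indices 0, 1..n, n+1..2n:
  e_0 pairs with itself, e_k pairs with e_(k+n).\<close>
definition formB :: "nat \<Rightarrow> cmat" where
  "formB n = (\<lambda>i j. if (i = 0 \<and> j = 0) \<or> (1 \<le> i \<and> i \<le> n \<and> j = i + n)
                       \<or> (n + 1 \<le> i \<and> i \<le> 2*n \<and> j + n = i) then 1 else 0)"

definition supported :: "nat \<Rightarrow> cmat \<Rightarrow> bool" where
  "supported N X \<longleftrightarrow> (\<forall>i j. (N \<le> i \<or> N \<le> j) \<longrightarrow> X i j = 0)"

definition soB :: "nat \<Rightarrow> cmat set" where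
  "soB n = {X. supported (2*n+1) X \<and>
              mmul (2*n+1) (mtrans X) (formB n) + mmul (2*n+1) (formB n) X = 0}"

definition cartanD :: "nat \<Rightarrow> (nat \<Rightarrow> complex) \<Rightarrow> cmat" where
  "cartanD n t = (\<lambda>i j. if i \<noteq> j then 0
                        else if 1 \<le> i \<and> i \<le> n then t i
                        else if n + 1 \<le> i \<and> i \<le> 2*n then - t (i - n) else 0)"

text \<open>A linear functional on the Cartan subalgebra is given by coefficients a_1..a_n
  (H = cartanD n t maps to sum a_k t_k); coefficients outside 1..n are taken to be 0.\<close>
definition wt_ok :: "nat \<Rightarrow> (nat \<Rightarrow> complex) \<Rightarrow> bool" where
  "wt_ok n a \<longleftrightarrow> (\<forall>k. (k < 1 \<or> n < k) \<longrightarrow> a k = 0)"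

definition root_space :: "nat \<Rightarrow> (nat \<Rightarrow> complex) \<Rightarrow> cmat set" where
  "root_space n a = {X \<in> soB n. \<forall>t. mbr (2*n+1) (cartanD n t) X
                                   = m_scale (\<Sum>k=1..n. a k * t k) X}"

definition is_root :: "nat \<Rightarrow> (nat \<Rightarrow> complex) \<Rightarrow> bool" where
  "is_root n a \<longleftrightarrow> wt_ok n a \<and> a \<noteq> 0 \<and> root_space n a \<noteq> {0}"

text \<open>Standard simple roots: alpha_l = eps_l - eps_(l+1) (l < n), alpha_n = eps_n;
  highest root eps_1 + eps_2 = alpha_1 + 2 alpha_2 + ... + 2 alpha_n.\<close>
definition simple_root :: "nat \<Rightarrow> nat \<Rightarrow> (nat \<Rightarrow> complex)" where
  "simple_root n l = (\<lambda>k. if l < n then (if k = l then 1 else if k = l + 1 then -1 else 0)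
                          else (if k = n then 1 else 0))"

definition root_coeff :: "nat \<Rightarrow> (nat \<Rightarrow> complex) \<Rightarrow> nat \<Rightarrow> complex" where
  "root_coeff n a = (THE c. (\<forall>l. (l < 1 \<or> n < l) \<longrightarrow> c l = 0) \<and>
                            (\<forall>k. a k = (\<Sum>l=1..n. c l * simple_root n l k)))"

definition ht :: "nat \<Rightarrow> nat set \<Rightarrow> (nat \<Rightarrow> complex) \<Rightarrow> complex" where
  "ht n \<Sigma> a = (\<Sum>l\<in>\<Sigma>. root_coeff n a l)"

text \<open>Graded piece n_m (m \<noteq> 0) of the grading associated to the set of simple roots
  with indices in \<Sigma>.\<close>
definition grade :: "nat \<Rightarrow> nat set \<Rightarrow> int \<Rightarrow> cmat set" where
  "grade n \<Sigma> m = cspan m_scale (\<Union>{root_space n a | a. is_root n a \<and> ht n \<Sigma> a = of_int m})"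

definition graded_iso :: "nat \<Rightarrow> nat \<Rightarrow> nat set \<Rightarrow> (fa \<Rightarrow> cmat) \<Rightarrow> bool" where
  "graded_iso r n \<Sigma> \<phi> \<longleftrightarrow>
     bij_betw \<phi> (free_nil3 r) (sum3 (grade n \<Sigma> (-1)) (grade n \<Sigma> (-2)) (grade n \<Sigma> (-3))) \<and>
     (\<forall>x\<in>free_nil3 r. \<forall>y\<in>free_nil3 r. \<forall>a b.
        \<phi> (fa_scale a x + fa_scale b y) = m_scale a (\<phi> x) + m_scale b (\<phi> y)) \<and>
     (\<forall>x\<in>free_nil3 r. \<forall>y\<in>free_nil3 r. \<phi> (fa_br x y) = mbr (2*n+1) (\<phi> x) (\<phi> y)) \<and>
     \<phi> ` free_f1 r = grade n \<Sigma> (-1) \<and>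
     \<phi> ` free_f2 r = grade n \<Sigma> (-2) \<and>
     \<phi> ` free_f3 r = grade n \<Sigma> (-3)"

end

theory Submission
  imports Defs
begin

text \<open>
  For degree-one elements x, y of the free nilpotent Lie algebra, the coefficient of
  [x, [x, y]] at the word j k j is 2 x_j (x_k y_j - x_j y_k); so [x, [x, y]] = 0 forces x and y
  to be linearly dependent, and a graded isomorphism would transport this to n_(-1).
  But n_(-1) contains the root vectors X = so_basis n 2 1 of eps_2 - eps_1 = -alpha_1 and
  Y = so_basis n 0 i of -eps_i = -(alpha_i + ... + alpha_n), both of Sigma_i-height -1;
  they are linearly independent, while [X, [X, Y]] = 0.
\<close>

lemma sum_fun_apply: "(\<Sum>v\<in>A. f v) w = (\<Sum>v\<in>A. f v w)"
  by (induction A rule: infinite_finite_induct) auto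

lemma zero_in_cspan: "0 \<in> cspan sc S"
  unfolding cspan_def by (intro CollectI exI[of _ "{}"]) simp

lemma in_cspan: "v \<in> S \<Longrightarrow> sc 1 v = v \<Longrightarrow> v \<in> cspan sc S"
  unfolding cspan_def by (intro CollectI exI[of _ "{v}"] exI[of _ "\<lambda>_. 1"]) simp

lemma sum3_intros:
  fixes A B C :: "'a::monoid_add set"
  assumes "0 \<in> A" "0 \<in> B" "0 \<in> C"
  shows "x \<in> A \<Longrightarrow> x \<in> sum3 A B C" "y \<in> B \<Longrightarrow> y \<in> sum3 A B C" "z \<in> C \<Longrightarrow> z \<in> sum3 A B C"
  unfolding sum3_def using assms by force+

lemma free_f1_vanishes_off_letters:
  assumes "x \<in> free_f1 r" "length w \<noteq> 1"
  shows "x w = 0"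
proof -
  obtain A c where x: "x = (\<Sum>v\<in>A. fa_scale (c v) v)" and A: "A \<subseteq> fa_gen ` {0..<r}"
    using assms(1) unfolding free_f1_def cspan_def by blast
  have "fa_scale (c v) v w = 0" if "v \<in> A" for v
  proof -
    obtain j where "v = fa_gen j" using A \<open>v \<in> A\<close> by blast
    then show ?thesis using assms(2) by (auto simp: fa_scale_def fa_gen_def)
  qed
  then show ?thesis using x by (simp add: sum_fun_apply)
qed

lemma fa_br_fa_br_at_jkj:
  assumes "\<And>w. length w \<noteq> 1 \<Longrightarrow> x w = 0" "\<And>w. length w \<noteq> 1 \<Longrightarrow> y w = 0"
  shows "fa_br x (fa_br x y) [j, k, j] = 2 * x [j] * (x [k] * y [j] - x [j] * y [k])"
proof -
  have "{1..<3::nat} = {1, 2}" "{1..<2::nat} = {1}" by auto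
  moreover have "x [] = 0" "y [] = 0" "x [j, k] = 0" "y [j, k] = 0" "x [k, j] = 0" "y [k, j] = 0"
    "x [j, k, j] = 0" "y [j, k, j] = 0"
    using assms by auto
  ultimately show ?thesis unfolding fa_br_def fa_mul_def by (simp add: algebra_simps)
qed

lemma fa_br_fa_br_eq_0_imp_collinear:
  assumes x1: "\<And>w. length w \<noteq> 1 \<Longrightarrow> x w = 0" and y1: "\<And>w. length w \<noteq> 1 \<Longrightarrow> y w = 0"
    and "fa_br x (fa_br x y) = 0"
  shows "x = 0 \<or> (\<exists>c. y = fa_scale c x)"
proof (cases "x = 0")
  case False
  then obtain w where "x w \<noteq> 0" by (auto simp: fun_eq_iff)
  moreover have "length w = 1" using x1 \<open>x w \<noteq> 0\<close> by blast
  ultimately obtain j where xj: "x [j] \<noteq> 0" by (cases w) auto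
  have key: "x [k] * y [j] = x [j] * y [k]" for k
    using fa_br_fa_br_at_jkj[of x y j k, OF x1 y1] \<open>fa_br x (fa_br x y) = 0\<close> xj by simp
  have "y u = fa_scale (y [j] / x [j]) x u" for u
  proof (cases "length u = 1")
    case True
    then obtain k where "u = [k]" by (auto simp: length_Suc_conv)
    then show ?thesis using key[of k] xj by (simp add: fa_scale_def field_simps)
  qed (simp add: x1 y1 fa_scale_def)
  then show ?thesis by blast
qed simp

lemma zero_in_free_f: "0 \<in> free_f1 r" "0 \<in> free_f2 r" "0 \<in> free_f3 r"
  unfolding free_f1_def free_f2_def free_f3_def by (fact zero_in_cspan)+

lemma free_f_subset_free_nil3:
  "free_f1 r \<subseteq> free_nil3 r" "free_f2 r \<subseteq> free_nil3 r" "free_f3 r \<subseteq> free_nil3 r"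
  unfolding free_nil3_def by (auto intro: sum3_intros zero_in_free_f)

lemma fa_br_in_free_f2: "x \<in> free_f1 r \<Longrightarrow> y \<in> free_f1 r \<Longrightarrow> fa_br x y \<in> free_f2 r"
  unfolding free_f2_def by (rule in_cspan) (auto simp: fa_scale_def)

lemma fa_br_in_free_f3: "x \<in> free_f1 r \<Longrightarrow> y \<in> free_f2 r \<Longrightarrow> fa_br x y \<in> free_f3 r"
  unfolding free_f3_def by (rule in_cspan) (auto simp: fa_scale_def)

lemma graded_iso_fa_scale:
  assumes "graded_iso r n \<Sigma> \<phi>" "x \<in> free_nil3 r"
  shows "\<phi> (fa_scale c x) = m_scale c (\<phi> x)"
proof -
  have "\<forall>x\<in>free_nil3 r. \<forall>y\<in>free_nil3 r. \<forall>a b.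
      \<phi> (fa_scale a x + fa_scale b y) = m_scale a (\<phi> x) + m_scale b (\<phi> y)"
    using assms(1) unfolding graded_iso_def by (elim conjE)
  then have "\<phi> (fa_scale c x + fa_scale 0 x) = m_scale c (\<phi> x) + m_scale 0 (\<phi> x)"
    using assms(2) by blast
  then show ?thesis by (simp add: fa_scale_def m_scale_def fun_eq_iff plus_fun_def)
qed

lemma graded_iso_zero:
  assumes "graded_iso r n \<Sigma> \<phi>"
  shows "\<phi> 0 = 0"
proof -
  have "0 \<in> free_nil3 r" using zero_in_free_f free_f_subset_free_nil3 by blast
  then have "\<phi> (fa_scale 0 0) = m_scale 0 (\<phi> 0)" by (rule graded_iso_fa_scale[OF assms])
  then show ?thesis by (simp add: fa_scale_def m_scale_def fun_eq_iff zero_fun_def)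
qed

lemma graded_iso_collinear_of_mbr_mbr_eq_0:
  assumes iso: "graded_iso r n \<Sigma> \<phi>"
    and X: "X \<in> grade n \<Sigma> (-1)" and Y: "Y \<in> grade n \<Sigma> (-1)"
    and XXY: "mbr (2*n+1) X (mbr (2*n+1) X Y) = 0"
  shows "X = 0 \<or> (\<exists>c. Y = m_scale c X)"
proof -
  have f1: "\<phi> ` free_f1 r = grade n \<Sigma> (-1)"
    using iso unfolding graded_iso_def by (elim conjE)
  have hom: "\<forall>x\<in>free_nil3 r. \<forall>y\<in>free_nil3 r. \<phi> (fa_br x y) = mbr (2*n+1) (\<phi> x) (\<phi> y)"
    using iso unfolding graded_iso_def by (elim conjE)
  have inj: "inj_on \<phi> (free_nil3 r)"
    using iso unfolding graded_iso_def bij_betw_def by (elim conjE)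
  obtain x where x: "x \<in> free_f1 r" "\<phi> x = X" using X unfolding f1[symmetric] by blast
  obtain y where y: "y \<in> free_f1 r" "\<phi> y = Y" using Y unfolding f1[symmetric] by blast
  have xy: "fa_br x y \<in> free_f2 r" using x(1) y(1) by (rule fa_br_in_free_f2)
  have xxy: "fa_br x (fa_br x y) \<in> free_f3 r" using x(1) xy by (rule fa_br_in_free_f3)
  have nil: "x \<in> free_nil3 r" "y \<in> free_nil3 r" "fa_br x y \<in> free_nil3 r"
      "fa_br x (fa_br x y) \<in> free_nil3 r" "0 \<in> free_nil3 r"
    using x(1) y(1) xy xxy zero_in_free_f(1) free_f_subset_free_nil3 by blast+
  have "\<phi> (fa_br x (fa_br x y)) = mbr (2*n+1) X (mbr (2*n+1) X Y)"
    using hom nil(1-3) x(2) y(2) by simp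
  also have "\<dots> = \<phi> 0" using XXY graded_iso_zero[OF iso] by simp
  finally have "fa_br x (fa_br x y) = 0"
    using inj nil(4,5) by (simp add: inj_on_eq_iff)
  then have "x = 0 \<or> (\<exists>c. y = fa_scale c x)"
    using x(1) y(1) by (intro fa_br_fa_br_eq_0_imp_collinear) (simp_all add: free_f1_vanishes_off_letters)
  then show ?thesis
  proof (elim disjE exE)
    assume "x = 0"
    then show ?thesis using x(2) graded_iso_zero[OF iso] by simp
  next
    fix c assume "y = fa_scale c x"
    then have "Y = m_scale c X" using x(2) y(2) graded_iso_fa_scale[OF iso nil(1)] by simp
    then show ?thesis by blast
  qed
qed

definition E :: "nat \<Rightarrow> nat \<Rightarrow> cmat" where
  "E a b = (\<lambda>i j. if i = a \<and> j = b then 1 else 0)"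

lemma mmul_E_left: "b < N \<Longrightarrow> mmul N (E a b) X = (\<lambda>i j. if i < N \<and> j < N \<and> i = a then X b j else 0)"
  by (auto simp: mmul_def E_def fun_eq_iff if_distrib[where f="\<lambda>z. z * _"] cong: if_cong)

lemma mmul_E_right: "a < N \<Longrightarrow> mmul N X (E a b) = (\<lambda>i j. if i < N \<and> j < N \<and> j = b then X i a else 0)"
  by (auto simp: mmul_def E_def fun_eq_iff if_distrib[where f="\<lambda>z. _ * z"] cong: if_cong)

lemma mmul_E_E:
  "a < N \<Longrightarrow> b < N \<Longrightarrow> c < N \<Longrightarrow> d < N \<Longrightarrow> mmul N (E a b) (E c d) = (if b = c then E a d else 0)"
  by (simp add: mmul_E_left) (auto simp: E_def fun_eq_iff)

lemma mmul_diff_left: "mmul N (A - B) C = mmul N A C - mmul N B C"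
  by (auto simp: mmul_def fun_eq_iff algebra_simps sum_subtractf)

lemma mmul_diff_right: "mmul N C (A - B) = mmul N C A - mmul N C B"
  by (auto simp: mmul_def fun_eq_iff algebra_simps sum_subtractf)

lemma mmul_zero_left [simp]: "mmul N 0 C = 0"
  by (auto simp: mmul_def fun_eq_iff)

lemma mmul_zero_right [simp]: "mmul N C 0 = 0"
  by (auto simp: mmul_def fun_eq_iff)

lemma mbr_diff_right: "mbr N D (A - B) = mbr N D A - mbr N D B"
  by (simp add: mbr_def mmul_diff_left mmul_diff_right)

lemma mtrans_E: "mtrans (E a b) = E b a"
  by (auto simp: mtrans_def E_def fun_eq_iff)

lemma mtrans_diff: "mtrans (A - B) = mtrans A - mtrans B"
  by (auto simp: mtrans_def fun_eq_iff)

lemma m_scale_diff: "m_scale c (A - B) = m_scale c A - m_scale c B"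
  by (auto simp: m_scale_def fun_eq_iff algebra_simps)

lemma mbr_diagonal_E:
  assumes "\<And>i j. i \<noteq> j \<Longrightarrow> D i j = 0" "a < N" "b < N"
  shows "mbr N D (E a b) = m_scale (D a a - D b b) (E a b)"
  using assms unfolding mbr_def
  by (simp add: mmul_E_left mmul_E_right) (auto simp: fun_eq_iff m_scale_def E_def)

definition partner :: "nat \<Rightarrow> nat \<Rightarrow> nat" where
  "partner n p = (if p = 0 then 0 else if p \<le> n then p + n else p - n)"

lemma partner_simps:
  "partner n 0 = 0" "1 \<le> p \<Longrightarrow> p \<le> n \<Longrightarrow> partner n p = p + n"
  unfolding partner_def by auto

lemma partner_less: "p < 2*n+1 \<Longrightarrow> partner n p < 2*n+1"
  unfolding partner_def by auto

lemma partner_partner: "p < 2*n+1 \<Longrightarrow> partner n (partner n p) = p"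
  unfolding partner_def by auto

lemma formB_eq_partner: "p < 2*n+1 \<Longrightarrow> formB n p q = (if q = partner n p then 1 else 0)"
  unfolding formB_def partner_def by auto

lemma formB_sym: "formB n p q = formB n q p"
  unfolding formB_def by auto

lemma mmul_E_formB: "a < 2*n+1 \<Longrightarrow> b < 2*n+1 \<Longrightarrow> mmul (2*n+1) (E a b) (formB n) = E a (partner n b)"
  using partner_less[of b n] by (simp add: mmul_E_left) (auto simp: fun_eq_iff E_def formB_eq_partner)

lemma mmul_formB_E: "a < 2*n+1 \<Longrightarrow> b < 2*n+1 \<Longrightarrow> mmul (2*n+1) (formB n) (E a b) = E (partner n a) b"
  using partner_less[of a n]
  by (simp add: mmul_E_right) (auto simp: fun_eq_iff E_def formB_sym[of n _ a] formB_eq_partner)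

definition so_basis :: "nat \<Rightarrow> nat \<Rightarrow> nat \<Rightarrow> cmat" where
  "so_basis n a b = E a b - E (partner n b) (partner n a)"

lemma so_basis_in_soB:
  assumes "a < 2*n+1" "b < 2*n+1"
  shows "so_basis n a b \<in> soB n"
proof -
  have p: "partner n a < 2*n+1" "partner n b < 2*n+1"
    by (intro partner_less assms)+
  have "supported (2*n+1) (so_basis n a b)"
    using assms p unfolding supported_def so_basis_def E_def by fastforce
  moreover have "mmul (2*n+1) (mtrans (so_basis n a b)) (formB n) + mmul (2*n+1) (formB n) (so_basis n a b) = 0"
    unfolding so_basis_def mtrans_diff mtrans_E mmul_diff_left mmul_diff_right
    using assms p by (simp only: mmul_E_formB mmul_formB_E partner_partner) simp
  ultimately show ?thesis unfolding soB_def by blast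
qed

lemma cartanD_partner:
  "p < 2*n+1 \<Longrightarrow> cartanD n t (partner n p) (partner n p) = - cartanD n t p p"
  unfolding cartanD_def partner_def by auto

lemma mbr_cartanD_so_basis:
  assumes "a < 2*n+1" "b < 2*n+1"
  shows "mbr (2*n+1) (cartanD n t) (so_basis n a b)
           = m_scale (cartanD n t a a - cartanD n t b b) (so_basis n a b)"
proof -
  have diag: "\<And>i j. i \<noteq> j \<Longrightarrow> cartanD n t i j = 0" by (simp add: cartanD_def)
  have p: "partner n a < 2*n+1" "partner n b < 2*n+1"
    by (intro partner_less assms)+
  show ?thesis
    unfolding so_basis_def mbr_diff_right m_scale_diff
    using assms p by (simp add: mbr_diagonal_E[OF diag] cartanD_partner)
qed

lemma sum_simple_root:
  "(\<Sum>l=1..n. c l * simple_root n l k) =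
     (if 1 \<le> k \<and> k \<le> n then c k else 0) - (if 2 \<le> k \<and> k \<le> n then c (k - 1) else 0)"
proof -
  have "(\<Sum>l=1..n. c l * simple_root n l k) =
        (\<Sum>l=1..n. (if k = l then c l else 0) - (if l = k - 1 then (if 2 \<le> k \<and> k \<le> n then c l else 0) else 0))"
    by (rule sum.cong) (auto simp: simple_root_def)
  also have "\<dots> = (if 1 \<le> k \<and> k \<le> n then c k else 0) - (if 2 \<le> k \<and> k \<le> n then c (k - 1) else 0)"
    by (simp add: sum_subtractf sum.delta) arith
  finally show ?thesis .
qed

lemma root_coeff_unique:
  assumes c0: "\<forall>l. (l < 1 \<or> n < l) \<longrightarrow> c l = 0"
    and ca: "\<forall>k. a k = (\<Sum>l=1..n. c l * simple_root n l k)"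
  shows "root_coeff n a = c"
  unfolding root_coeff_def
proof (rule the_equality)
  fix d assume d: "(\<forall>l. (l < 1 \<or> n < l) \<longrightarrow> d l = 0) \<and> (\<forall>k. a k = (\<Sum>l=1..n. d l * simple_root n l k))"
  have eq: "(if 1 \<le> k \<and> k \<le> n then c k else 0) - (if 2 \<le> k \<and> k \<le> n then c (k - 1) else 0)
      = (if 1 \<le> k \<and> k \<le> n then d k else 0) - (if 2 \<le> k \<and> k \<le> n then d (k - 1) else 0)" for k
    using d ca by (metis sum_simple_root)
  have "d k = c k" for k
  proof (induction k)
    case (Suc m)
    then show ?case using eq[of "Suc m"] c0 d by (cases "Suc m \<le> n"; cases m) auto
  qed (use c0 d in auto)
  then show "d = c" by auto
qed (use assms in blast)

lemma root_coeff_eq_partial_sums: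
  assumes "wt_ok n a"
  shows "root_coeff n a = (\<lambda>l. if 1 \<le> l \<and> l \<le> n then \<Sum>k=1..l. a k else 0)"
proof (rule root_coeff_unique)
  show "\<forall>k. a k = (\<Sum>l=1..n. (if 1 \<le> l \<and> l \<le> n then \<Sum>k=1..l. a k else 0) * simple_root n l k)"
  proof
    fix k
    show "a k = (\<Sum>l=1..n. (if 1 \<le> l \<and> l \<le> n then \<Sum>k=1..l. a k else 0) * simple_root n l k)"
      unfolding sum_simple_root using assms unfolding wt_ok_def
      by (cases k) (auto simp: not_less_eq_eq)
  qed
qed auto

lemma so_basis_in_grade:
  assumes "a < 2*n+1" "b < 2*n+1" "so_basis n a b \<noteq> 0"
    and "wt_ok n w" "w \<noteq> 0"
    and "\<And>t. cartanD n t a a - cartanD n t b b = (\<Sum>k=1..n. w k * t k)"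
    and "ht n \<Sigma> w = of_int m"
  shows "so_basis n a b \<in> grade n \<Sigma> m"
proof -
  have "mbr (2*n+1) (cartanD n t) (so_basis n a b) = m_scale (\<Sum>k=1..n. w k * t k) (so_basis n a b)" for t
    using mbr_cartanD_so_basis[OF assms(1,2)] assms(6) by simp
  then have "so_basis n a b \<in> root_space n w"
    unfolding root_space_def using so_basis_in_soB[OF assms(1,2)] by blast
  moreover from this have "is_root n w"
    unfolding is_root_def using assms(3-5) by blast
  ultimately have "so_basis n a b \<in> \<Union>{root_space n w | w. is_root n w \<and> ht n \<Sigma> w = of_int m}"
    using assms(7) by blast
  then show ?thesis
    unfolding grade_def by (rule in_cspan) (simp add: m_scale_def)
qed

lemma so_basis_diagonal_entry: "a \<noteq> partner n b \<Longrightarrow> so_basis n a b a b = 1"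
  by (simp add: so_basis_def E_def)

lemma so_basis_neq_0: "a \<noteq> partner n b \<Longrightarrow> so_basis n a b \<noteq> 0"
  using so_basis_diagonal_entry[of a n b] by auto

lemma so_basis_2_1_in_grade:
  assumes "2 \<le> n" "2 \<le> i" "i \<le> n"
  shows "so_basis n 2 1 \<in> grade n {1, i} (-1)"
proof (rule so_basis_in_grade)
  let ?w = "\<lambda>k. if k = 2 then 1 else if k = 1 then -1 else 0 :: complex"
  show "cartanD n t 2 2 - cartanD n t 1 1 = (\<Sum>k=1..n. ?w k * t k)" for t
    using assms by (simp add: cartanD_def if_distrib[where f="\<lambda>z. z * _"] sum.If_cases)
  show "ht n {1, i} ?w = of_int (-1)"
    using assms by (simp add: ht_def root_coeff_eq_partial_sums wt_ok_def sum.If_cases)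
  show "so_basis n 2 1 \<noteq> 0"
    using assms by (intro so_basis_neq_0) (simp add: partner_simps)
qed (use assms in \<open>auto simp: wt_ok_def fun_eq_iff\<close>)

lemma so_basis_0_i_in_grade:
  assumes "2 \<le> n" "2 \<le> i" "i \<le> n"
  shows "so_basis n 0 i \<in> grade n {1, i} (-1)"
proof (rule so_basis_in_grade)
  let ?w = "\<lambda>k. if k = i then -1 else 0 :: complex"
  show "cartanD n t 0 0 - cartanD n t i i = (\<Sum>k=1..n. ?w k * t k)" for t
    using assms by (simp add: cartanD_def if_distrib[where f="\<lambda>z. z * _"] sum.If_cases)
  show "ht n {1, i} ?w = of_int (-1)"
    using assms by (simp add: ht_def root_coeff_eq_partial_sums wt_ok_def sum.If_cases)
  show "so_basis n 0 i \<noteq> 0"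
    using assms by (intro so_basis_neq_0) (simp add: partner_simps)
qed (use assms in \<open>auto simp: wt_ok_def fun_eq_iff\<close>)

text \<open>The left-hand side would have weight 2 (eps_2 - eps_1) - eps_i, which is not a root.\<close>

lemma mbr_so_basis_2_1_twice_so_basis_0_i:
  assumes "2 \<le> n" "2 \<le> i" "i \<le> n"
  shows "mbr (2*n+1) (so_basis n 2 1) (mbr (2*n+1) (so_basis n 2 1) (so_basis n 0 i)) = 0"
proof -
  \<comment> \<open>An opaque dimension N keeps simp from turning 2*n+1 into Suc (2*n) and re-deriving every index bound.\<close>
  define N where "N = 2*n+1"
  have X: "so_basis n 2 1 = E 2 1 - E (1+n) (2+n)" and Y: "so_basis n 0 i = E 0 i - E (i+n) 0"
    using assms by (simp_all add: so_basis_def partner_simps)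
  have "2 < N" "1 < N" "1+n < N" "2+n < N" "0 < N" "i < N" "i+n < N"
    using assms unfolding N_def by auto
  then have "mbr N (so_basis n 2 1) (mbr N (so_basis n 2 1) (so_basis n 0 i)) = 0"
    using assms unfolding X Y mbr_def
    by (cases "i = 2") (simp_all add: mmul_diff_left mmul_diff_right mmul_E_E)
  then show ?thesis unfolding N_def .
qed

lemma so_basis_0_i_not_multiple:
  assumes "2 \<le> n" "2 \<le> i" "i \<le> n"
  shows "so_basis n 0 i \<noteq> m_scale c (so_basis n 2 1)"
proof -
  have "so_basis n 0 i 0 i = 1"
    using so_basis_diagonal_entry[of 0 n i] assms by (simp add: partner_simps)
  moreover have "so_basis n 2 1 0 i = 0"
    using assms by (simp add: so_basis_def E_def partner_simps)
  ultimately show ?thesis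
    by (metis m_scale_def mult_zero_right zero_neq_one)
qed

theorem theorem4p6:
  fixes n i r :: nat
  assumes "2 \<le> n" and "2 \<le> i" and "i \<le> n" and "0 < r"
  shows "\<not> (\<exists>\<phi>. graded_iso r n {1, i} \<phi>)"
proof
  assume "\<exists>\<phi>. graded_iso r n {1, i} \<phi>"
  then obtain \<phi> where "graded_iso r n {1, i} \<phi>" ..
  then have "so_basis n 2 1 = 0 \<or> (\<exists>c. so_basis n 0 i = m_scale c (so_basis n 2 1))"
    using so_basis_2_1_in_grade[OF assms(1-3)] so_basis_0_i_in_grade[OF assms(1-3)]
      mbr_so_basis_2_1_twice_so_basis_0_i[OF assms(1-3)]
    by (rule graded_iso_collinear_of_mbr_mbr_eq_0)
  moreover have "so_basis n 2 1 \<noteq> 0"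
    using assms by (intro so_basis_neq_0) (simp add: partner_simps)
  ultimately show False
    using so_basis_0_i_not_multiple[OF assms(1-3)] by blast
qed

end
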